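(* Let $a\in \mathcal{A}$ have $w$-weighted core inverse $x$. Then $a$ has a $w$-weighted generalized core-EP inverse and $a^{\mathrm{gcEP},w}=x$.
   Context: $\mathcal{A}$ is a complex Banach *-algebra with identity and $w\in\mathcal{A}$. The $w$-weighted core inverse of $a$ is the unique $x$ with $a(wx)^2=x$, $(wawx)^*=wawx$, $xw(aw)^2=aw$. The $w$-weighted generalized core-EP inverse of $a$ is the unique $x$ with $a(wx)^2=x$, $(wawx)^*=wawx$, $\lim_{n\to\infty}\|(aw)^n-(xw)(aw)^{n+1}\|^{1/n}=0$, denoted $a^{\mathrm{gcEP},w}$. *)

theory Defs
  imports "HOL-Analysis.Analysis"
begin

text \<open>A complex Banach *-algebra with identity: the carrier type is a real Banach algebra
with unit; the complex scalar multiplication scC (extending the real one) and the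
involution st are given explicitly.\<close>

definition complex_banach_star_algebra ::
  "(complex \<Rightarrow> 'a::{real_normed_algebra_1,banach} \<Rightarrow> 'a) \<Rightarrow> ('a \<Rightarrow> 'a) \<Rightarrow> bool" where
  "complex_banach_star_algebra scC st \<longleftrightarrow>
     (\<forall>c d x. scC (c + d) x = scC c x + scC d x) \<and>
     (\<forall>c x y. scC c (x + y) = scC c x + scC c y) \<and>
     (\<forall>c d x. scC (c * d) x = scC c (scC d x)) \<and>
     (\<forall>r x. scC (complex_of_real r) x = scaleR r x) \<and>
     (\<forall>c x. norm (scC c x) = cmod c * norm x) \<and>
     (\<forall>c x y. scC c (x * y) = scC c x * y \<and> scC c (x * y) = x * scC c y) \<and>
     (\<forall>x. st (st x) = x) \<and>
     (\<forall>x y. st (x + y) = st x + st y) \<and>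
     (\<forall>x y. st (x * y) = st y * st x) \<and>
     (\<forall>c x. st (scC c x) = scC (cnj c) (st x))"

definition w_core_inv :: "('a::real_normed_algebra_1 \<Rightarrow> 'a) \<Rightarrow> 'a \<Rightarrow> 'a \<Rightarrow> 'a \<Rightarrow> bool" where
  "w_core_inv st w a x \<longleftrightarrow>
     a * (w * x)^2 = x \<and> st (w * a * w * x) = w * a * w * x \<and> x * w * (a * w)^2 = a * w"

definition w_gcEP_inv :: "('a::real_normed_algebra_1 \<Rightarrow> 'a) \<Rightarrow> 'a \<Rightarrow> 'a \<Rightarrow> 'a \<Rightarrow> bool" where
  "w_gcEP_inv st w a x \<longleftrightarrow>
     a * (w * x)^2 = x \<and> st (w * a * w * x) = w * a * w * x \<and>
     (\<lambda>n. root n (norm ((a * w)^n - (x * w) * (a * w)^(n+1)))) \<longlonglongrightarrow> 0"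

definition w_gcEP :: "('a::real_normed_algebra_1 \<Rightarrow> 'a) \<Rightarrow> 'a \<Rightarrow> 'a \<Rightarrow> 'a" where
  "w_gcEP st w a = (THE x. w_gcEP_inv st w a x)"

end

theory Submission
  imports Defs
begin

text \<open>Since \<open>x w (a w)\<^sup>2 = a w\<close>, the sequence \<open>(a w)\<^sup>n - (x w)(a w)\<^sup>n\<^sup>+\<^sup>1\<close> vanishes for
  \<open>n \<ge> 1\<close>, so \<open>x\<close> is a w-weighted generalized core-EP inverse. For uniqueness let \<open>y\<close> be
  another one and put \<open>P = w a w x\<close>, \<open>Q = w a w y\<close>. Then \<open>P Q = Q\<close>, hence \<open>Q P = Q\<close> by
  taking adjoints of these self-adjoint elements, and \<open>P - Q P\<close> factors through
  \<open>(a w)\<^sup>n - (y w)(a w)\<^sup>n\<^sup>+\<^sup>1\<close> with an outer factor growing at most geometrically in \<open>n\<close>.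
  The root condition forces \<open>P = Q P = Q\<close>, and then \<open>x = x P = x Q = y\<close>.\<close>

lemma le_0_if_bounded_by_root_null_seq:
  fixes c M t :: real and e :: "nat \<Rightarrow> real"
  assumes t: "0 \<le> t" and e: "\<And>n. 0 \<le> e n"
    and lim: "(\<lambda>n. root n (e n)) \<longlonglongrightarrow> 0"
    and bound: "\<And>n. c \<le> M * e n * t ^ n"
  shows "c \<le> 0"
proof (rule ccontr)
  assume "\<not> c \<le> 0"
  then have c: "0 < c" by simp
  with bound[of 0] have "0 < M * e 0"
    by simp
  with e[of 0] have M: "0 < M"
    by (simp add: zero_less_mult_iff)
  have "(\<lambda>n. root n c) \<longlonglongrightarrow> 1"
    using c by (rule LIMSEQ_root_const)
  moreover have "(\<lambda>n. root n M * root n (e n) * t) \<longlonglongrightarrow> 1 * 0 * t"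
    by (intro tendsto_intros LIMSEQ_root_const[OF M] lim)
  moreover have "root n c \<le> root n M * root n (e n) * t" if "n \<ge> 1" for n
  proof -
    have "root n c \<le> root n (M * e n * t ^ n)"
      using bound[of n] that by simp
    also have "\<dots> = root n M * root n (e n) * t"
      using that t by (simp add: real_root_mult real_root_power_cancel)
    finally show ?thesis .
  qed
  ultimately have "1 \<le> 1 * 0 * t"
    by (intro LIMSEQ_le) auto
  then show False by simp
qed

lemma eq_0_if_factors_through_root_null_seq:
  fixes u v T z :: "'a::real_normed_algebra_1" and D :: "nat \<Rightarrow> 'a"
  assumes lim: "(\<lambda>n. root n (norm (D n))) \<longlonglongrightarrow> 0"
    and factor: "\<And>n. u = v * (D n * (T ^ n * z))"
  shows "u = 0"
proof -
  have "norm u \<le> (norm v * norm z) * norm (D n) * norm T ^ n" for n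
  proof -
    have "norm u \<le> norm v * (norm (D n) * (norm (T ^ n) * norm z))"
      unfolding factor[of n]
      by (intro order.trans[OF norm_mult_ineq] mult_left_mono norm_mult_ineq) auto
    also have "\<dots> \<le> norm v * (norm (D n) * (norm T ^ n * norm z))"
      by (intro mult_left_mono mult_right_mono norm_power_ineq) auto
    finally show ?thesis
      by (simp add: ac_simps)
  qed
  then have "norm u \<le> 0"
    using lim by (intro le_0_if_bounded_by_root_null_seq[of "norm T"]) auto
  then show ?thesis by simp
qed

lemma power_mult_power_cancel:
  fixes A X z :: "'a::monoid_mult"
  assumes AXX: "A * X * X = X" and AXz: "A * X * z = z"
  shows "A ^ n * X ^ n * z = z"
proof (induction n)
  case 0
  show ?case by simp
next
  case (Suc n)
  have step: "A * X * (X ^ n * z) = X ^ n * z"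
  proof (cases n)
    case (Suc m)
    have "A * X * (X ^ n * z) = A * X * X * (X ^ m * z)"
      by (simp add: Suc mult.assoc)
    with AXX show ?thesis by (simp add: Suc mult.assoc)
  qed (simp add: AXz)
  have "A ^ Suc n * X ^ Suc n * z = A ^ n * (A * X * (X ^ n * z))"
    by (simp only: power_Suc2[of A] power_Suc[of X] mult.assoc)
  also have "\<dots> = A ^ n * X ^ n * z"
    by (simp only: step) (simp only: mult.assoc)
  finally show ?case
    using Suc.IH by simp
qed

context
  fixes a w x :: "'a::monoid_mult"
  assumes core1: "a * (w * x)\<^sup>2 = x" and core3: "x * w * (a * w)\<^sup>2 = a * w"
begin

lemma w_core_outer: "x * (w * a * w) * x = x"
proof -
  have "x * (w * a * w) * x = x * (w * a * w) * (a * (w * x)\<^sup>2)"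
    by (simp only: core1)
  also have "\<dots> = x * w * (a * w)\<^sup>2 * (x * w * x)"
    by (simp add: power2_eq_square mult.assoc)
  also have "\<dots> = a * (w * x)\<^sup>2"
    by (simp only: core3) (simp add: power2_eq_square mult.assoc)
  finally show ?thesis
    by (simp only: core1)
qed

lemma w_core_inner: "a * w * (x * w) * (a * w) = a * w"
proof -
  have "a * w * (x * w) * (a * w) = a * w * (x * w) * (x * w * (a * w)\<^sup>2)"
    by (simp only: core3)
  also have "\<dots> = a * (w * x)\<^sup>2 * w * (a * w)\<^sup>2"
    by (simp add: power2_eq_square mult.assoc)
  also have "\<dots> = x * w * (a * w)\<^sup>2"
    by (simp only: core1)
  finally show ?thesis
    by (simp only: core3)
qed

lemma w_core_power_cancel: "(a * w) ^ n * (x * w) ^ n * x = x"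
proof (rule power_mult_power_cancel)
  have "a * w * (x * w) * (x * w) = a * (w * x)\<^sup>2 * w"
    by (simp add: power2_eq_square mult.assoc)
  then show "a * w * (x * w) * (x * w) = x * w"
    by (simp only: core1)
  have "a * w * (x * w) * x = a * (w * x)\<^sup>2"
    by (simp add: power2_eq_square mult.assoc)
  then show "a * w * (x * w) * x = x"
    by (simp only: core1)
qed

end

lemma w_core_inv_imp_w_gcEP_inv:
  assumes "w_core_inv st w a x"
  shows "w_gcEP_inv st w a x"
proof -
  have core3: "x * w * (a * w)\<^sup>2 = a * w"
    using assms by (simp add: w_core_inv_def)
  have "(x * w) * (a * w) ^ (Suc m + 1) = (a * w) ^ Suc m" for m
  proof -
    have "(x * w) * (a * w) ^ (Suc m + 1) = x * w * (a * w)\<^sup>2 * (a * w) ^ m"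
      by (simp add: mult.assoc flip: power_add)
    also have "\<dots> = (a * w) ^ Suc m"
      by (simp only: core3 power_Suc)
    finally show ?thesis .
  qed
  then have "root n (norm ((a * w) ^ n - (x * w) * (a * w) ^ (n + 1))) = 0" for n
    by (cases n) simp_all
  then show ?thesis
    using assms by (simp add: w_core_inv_def w_gcEP_inv_def)
qed

lemma w_gcEP_inv_eq_w_core_inv:
  fixes st :: "'a::real_normed_algebra_1 \<Rightarrow> 'a"
  assumes st_mult: "\<And>u v. st (u * v) = st v * st u"
    and core: "w_core_inv st w a x" and gcEP: "w_gcEP_inv st w a y"
  shows "y = x"
proof -
  have core1: "a * (w * x)\<^sup>2 = x" and P_adj: "st (w * a * w * x) = w * a * w * x"
    and core3: "x * w * (a * w)\<^sup>2 = a * w"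
    using core by (simp_all add: w_core_inv_def)
  have gcEP1: "a * (w * y)\<^sup>2 = y" and Q_adj: "st (w * a * w * y) = w * a * w * y"
    and lim: "(\<lambda>n. root n (norm ((a * w) ^ n - y * w * (a * w) ^ (n + 1)))) \<longlonglongrightarrow> 0"
    using gcEP by (simp_all add: w_gcEP_inv_def)
  define P where "P = w * a * w * x"
  define Q where "Q = w * a * w * y"
  have st_P: "st P = P" and st_Q: "st Q = Q"
    using P_adj Q_adj by (simp_all add: P_def Q_def)
  have "P * Q = w * (a * w * (x * w) * (a * w)) * y"
    by (simp add: P_def Q_def mult.assoc)
  also have "\<dots> = Q"
    by (simp only: w_core_inner[OF core1 core3]) (simp add: Q_def mult.assoc)
  finally have PQ: "P * Q = Q" .
  have QP: "Q * P = Q"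
    using arg_cong[OF PQ, of st] by (simp add: st_mult st_P st_Q)
  have "P - Q * P = (w * a * w) * (((a * w) ^ n - y * w * (a * w) ^ (n + 1)) * ((x * w) ^ n * x))"
    for n
  proof -
    have "(w * a * w) * (((a * w) ^ n - y * w * (a * w) ^ (n + 1)) * ((x * w) ^ n * x))
        = w * a * w * ((a * w) ^ n * (x * w) ^ n * x)
          - Q * (w * a * w * ((a * w) ^ n * (x * w) ^ n * x))"
      by (simp add: Q_def algebra_simps power_Suc)
    also have "\<dots> = P - Q * P"
      by (simp only: w_core_power_cancel[OF core1 core3]) (simp add: P_def)
    finally show ?thesis ..
  qed
  then have "P - Q * P = 0"
    using lim by (intro eq_0_if_factors_through_root_null_seq) auto
  with QP have "P = Q" by simp
  have "x = x * (w * a * w) * x"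
    by (simp only: w_core_outer[OF core1 core3])
  also have "\<dots> = x * P"
    by (simp add: P_def mult.assoc)
  also have "\<dots> = x * Q"
    by (simp only: \<open>P = Q\<close>)
  also have "\<dots> = x * w * a * w * (a * (w * y)\<^sup>2)"
    by (simp add: Q_def gcEP1 mult.assoc)
  also have "\<dots> = x * w * (a * w)\<^sup>2 * (y * w * y)"
    by (simp add: power2_eq_square mult.assoc)
  also have "\<dots> = a * (w * y)\<^sup>2"
    by (simp only: core3) (simp add: power2_eq_square mult.assoc)
  finally show ?thesis
    by (simp only: gcEP1)
qed

theorem corollary2p2:
  fixes scC :: "complex \<Rightarrow> 'a::{real_normed_algebra_1,banach} \<Rightarrow> 'a"
    and st :: "'a \<Rightarrow> 'a" and a w x :: 'a
  assumes "complex_banach_star_algebra scC st"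
    and "w_core_inv st w a x"
  shows "(\<exists>y. w_gcEP_inv st w a y) \<and> w_gcEP st w a = x"
proof -
  have st_mult: "\<And>u v. st (u * v) = st v * st u"
    using assms(1) by (simp add: complex_banach_star_algebra_def)
  have gcEP: "w_gcEP_inv st w a x"
    using assms(2) by (rule w_core_inv_imp_w_gcEP_inv)
  moreover have "w_gcEP st w a = x"
    unfolding w_gcEP_def
    using gcEP w_gcEP_inv_eq_w_core_inv[OF st_mult assms(2)] by (rule the_equality)
  ultimately show ?thesis by blast
qed

end
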